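(* Let $T$ be an $\mathbb{N}$-tableau and let $\widehat{T}$ be its image under the toggle map defined in the context. Then the image of the transpose $T^t$ under the toggle map is $\widehat{T}^t$.
   Context: Partitions are drawn in English notation with matrix coordinates: the box in row $i$ and column $j$ is $(i,j)$. An $\mathbb{N}$-tableau of shape $\lambda$ is an assignment of a nonnegative integer to each box of $\lambda$; its transpose $T^t$ has shape the conjugate partition $\lambda'$ and entry $t_{ji}$ at $(i,j)$. A corner box of a partition is a box $(i,j)$ such that neither $(i+1,j)$ nor $(i,j+1)$ is a box. The toggle map $T\mapsto\widehat{T}$ is defined recursively: $\widehat{\emptyset}=\emptyset$; if $T'$ is obtained from $T$ by adding a corner box $(i,j)$ (of $\mathrm{sh}(T')$) with entry $x$, then $\widehat{T'}$ is obtained from $\widehat{T}$ as follows. For $k\ge1$ let $\beta_k,\gamma_k,\alpha_k$ be the entries of $\widehat{T}$ at $(i-k,j-k)$, $(i-k+1,j-k)$, $(i-k,j-k+1)$ respectively (taken to be $0$ if the box is not in $\mathrm{sh}(T)$). Then $\widehat{T'}$ agrees with $\widehat{T}$ except that for $1\le k<\min(i,j)$ the entry at $(i-k,j-k)$ becomes $\max(\alpha_{k+1},\gamma_{k+1})+\min(\alpha_k,\gamma_k)-\beta_k$, and the entry at $(i,j)$ is $\max(\alpha_1,\gamma_1)+x$. This is independent of the order in which boxes are added. *)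

theory Defs
  imports Main
begin

text \<open>Partitions are weakly decreasing lists of positive naturals (English notation).
  Boxes are 1-indexed matrix coordinates (row i, column j).\<close>

definition is_partition :: "nat list \<Rightarrow> bool" where
  "is_partition lam \<longleftrightarrow> sorted_wrt (\<ge>) lam \<and> 0 \<notin> set lam"

definition boxes :: "nat list \<Rightarrow> (nat \<times> nat) set" where
  "boxes lam = {(i, j). 1 \<le> i \<and> i \<le> length lam \<and> 1 \<le> j \<and> j \<le> lam ! (i - 1)}"

definition conj_part :: "nat list \<Rightarrow> nat list" where
  "conj_part lam = (if lam = [] then []
     else map (\<lambda>j. length (filter (\<lambda>r. j \<le> r) lam)) [1..<Suc (hd lam)])"

text \<open>Boxes of a partition in reading order (row by row, left to right);
  each box added is a corner box of the shape obtained so far.\<close>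
definition reading_boxes :: "nat list \<Rightarrow> (nat \<times> nat) list" where
  "reading_boxes lam =
     concat (map (\<lambda>i. map (\<lambda>j. (i, j)) [1..<Suc (lam ! (i - 1))]) [1..<Suc (length lam)])"

text \<open>One step of the toggle map: the current shape S with current values f of the
  toggled tableau; add the corner box (i,j) with entry x. Values are computed in int.\<close>
definition toggle_step ::
  "(nat \<Rightarrow> nat \<Rightarrow> nat) \<Rightarrow> (nat \<times> nat) set \<times> (nat \<Rightarrow> nat \<Rightarrow> int) \<Rightarrow> nat \<times> nat
     \<Rightarrow> (nat \<times> nat) set \<times> (nat \<Rightarrow> nat \<Rightarrow> int)" where
  "toggle_step t Sf ij =
    (let S = fst Sf; f = snd Sf; i = fst ij; j = snd ij;
         v = (\<lambda>p q. if (p, q) \<in> S then f p q else 0);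
         \<alpha> = (\<lambda>k. v (i - k) (j - k + 1));
         \<beta> = (\<lambda>k. v (i - k) (j - k));
         \<gamma> = (\<lambda>k. v (i - k + 1) (j - k))
     in (insert (i, j) S,
         (\<lambda>a b. if (a, b) = (i, j) then max (\<alpha> 1) (\<gamma> 1) + int (t i j)
                else if (\<exists>k. 1 \<le> k \<and> k < min i j \<and> a = i - k \<and> b = j - k)
                  then (let k = i - a in max (\<alpha> (k + 1)) (\<gamma> (k + 1)) + min (\<alpha> k) (\<gamma> k) - \<beta> k)
                else f a b)))"

text \<open>The toggle map applied to the N-tableau of shape lam with entries t (entries of t
  outside the shape are ignored); the result is 0 outside the shape.\<close>
definition toggle :: "nat list \<Rightarrow> (nat \<Rightarrow> nat \<Rightarrow> nat) \<Rightarrow> (nat \<Rightarrow> nat \<Rightarrow> int)" where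
  "toggle lam t =
    (\<lambda>a b. if (a, b) \<in> boxes lam
           then snd (foldl (toggle_step t) ({}, (\<lambda>_ _. 0)) (reading_boxes lam)) a b
           else 0)"

end

(*
  A toggle step at the corner (i, j) rewrites only entries of content j - i (the diagonal of
  (i, j)) and reads only entries whose content differs from j - i by at most one. Incomparable
  corners have contents at least two apart, so their steps commute; since any two orders of
  adding the boxes of a shape one corner at a time are related by such swaps, the result does not
  depend on the order. The step itself is symmetric under transposition, so toggling T^t along the
  row reading of the conjugate shape is the transpose of toggling T along a column reading of its
  shape, which by order independence is the toggled T.
*)
theory Submission
  imports Defs "HOL-Library.Product_Order"
begin

definition entry :: "(nat \<times> nat) set \<Rightarrow> (nat \<Rightarrow> nat \<Rightarrow> int) \<Rightarrow> nat \<Rightarrow> nat \<Rightarrow> int" where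
  "entry S f p q = (if (p, q) \<in> S then f p q else 0)"

definition nw_diag :: "nat \<Rightarrow> nat \<Rightarrow> nat \<Rightarrow> nat \<Rightarrow> bool" where
  "nw_diag i j a b \<longleftrightarrow> (\<exists>k < min i j. a = i - k \<and> b = j - k)"

definition content :: "nat \<Rightarrow> nat \<Rightarrow> int" where
  "content a b = int b - int a"

text \<open>At a box (a, b) of the diagonal, the paper's \<open>\<alpha>\<^sub>k, \<gamma>\<^sub>k, \<beta>\<^sub>k\<close> are the entries at
  (a, b + 1), (a + 1, b), (a, b), and \<open>\<alpha>\<^sub>k\<^sub>+\<^sub>1, \<gamma>\<^sub>k\<^sub>+\<^sub>1\<close> those at (a - 1, b), (a, b - 1).\<close>

definition toggled_entry ::
  "(nat \<Rightarrow> nat \<Rightarrow> nat) \<Rightarrow> (nat \<times> nat) set \<Rightarrow> (nat \<Rightarrow> nat \<Rightarrow> int) \<Rightarrow> nat \<Rightarrow> nat \<Rightarrow> nat \<Rightarrow> nat \<Rightarrow> int" where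
  "toggled_entry t S f i j a b = max (entry S f (a - 1) b) (entry S f a (b - 1)) +
     (if (a, b) = (i, j) then int (t i j)
      else min (entry S f a (b + 1)) (entry S f (a + 1) b) - entry S f a b)"

lemma toggle_step_eq:
  assumes "1 \<le> i" "1 \<le> j"
  shows "toggle_step t (S, f) (i, j) =
    (insert (i, j) S, \<lambda>a b. if nw_diag i j a b then toggled_entry t S f i j a b else f a b)"
proof -
  have "snd (toggle_step t (S, f) (i, j)) a b =
      (if nw_diag i j a b then toggled_entry t S f i j a b else f a b)" for a b
  proof -
    let ?k = "i - a"
    have step: "snd (toggle_step t (S, f) (i, j)) a b =
      (if (a, b) = (i, j) then max (entry S f (i - 1) (j - 1 + 1)) (entry S f (i - 1 + 1) (j - 1)) + int (t i j)
       else if \<exists>k. 1 \<le> k \<and> k < min i j \<and> a = i - k \<and> b = j - k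
       then max (entry S f (i - (?k + 1)) (j - (?k + 1) + 1)) (entry S f (i - (?k + 1) + 1) (j - (?k + 1)))
         + min (entry S f (i - ?k) (j - ?k + 1)) (entry S f (i - ?k + 1) (j - ?k)) - entry S f (i - ?k) (j - ?k)
       else f a b)"
      unfolding toggle_step_def Let_def entry_def fst_conv snd_conv by (rule refl)
    consider "(a, b) = (i, j)"
      | k where "1 \<le> k" "k < min i j" "a = i - k" "b = j - k"
      | "(a, b) \<noteq> (i, j)" "\<not> nw_diag i j a b"
      unfolding nw_diag_def by (metis diff_zero less_one not_less)
    then show ?thesis
    proof cases
      case 1
      moreover have "nw_diag i j i j"
        using assms unfolding nw_diag_def by (intro exI[of _ 0]) simp
      moreover have "i - 1 + 1 = i" "j - 1 + 1 = j"
        using assms by simp_all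
      ultimately show ?thesis
        unfolding step toggled_entry_def by simp
    next
      case 2
      then have "nw_diag i j a b" "(a, b) \<noteq> (i, j)" "\<exists>k. 1 \<le> k \<and> k < min i j \<and> a = i - k \<and> b = j - k"
        "i - (?k + 1) = a - 1" "j - (?k + 1) + 1 = b" "i - (?k + 1) + 1 = a" "j - (?k + 1) = b - 1"
        "i - ?k = a" "j - ?k = b" "j - ?k + 1 = b + 1" "i - ?k + 1 = a + 1"
        unfolding nw_diag_def by auto
      then show ?thesis
        unfolding step toggled_entry_def by (simp only: if_True if_False)
    next
      case 3
      then have "\<not> (\<exists>k. 1 \<le> k \<and> k < min i j \<and> a = i - k \<and> b = j - k)"
        unfolding nw_diag_def by blast
      with 3 show ?thesis
        unfolding step by (simp only: if_False)
    qed
  qed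
  then show ?thesis
    by (simp add: toggle_step_def Let_def fun_eq_iff)
qed

lemma nw_diag_content:
  assumes "nw_diag i j a b"
  shows "content a b = content i j" "1 \<le> a" "1 \<le> b"
  using assms unfolding nw_diag_def content_def by auto

lemma abs_content_diff_ge_2:
  assumes "\<not> (i, j) \<le> (i', j')" "\<not> (i', j') \<le> (i, j)"
  shows "\<bar>content i j - content i' j'\<bar> \<ge> 2"
  using assms unfolding content_def by auto

lemma entry_toggle_step_off_diag:
  assumes "1 \<le> i" "1 \<le> j" "content p q \<noteq> content i j"
  shows "entry (fst (toggle_step t (S, f) (i, j))) (snd (toggle_step t (S, f) (i, j))) p q = entry S f p q"
  using assms nw_diag_content[of i j p q]
  unfolding toggle_step_eq[OF assms(1,2)] entry_def content_def by auto

lemma toggled_entry_cong: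
  assumes "nw_diag i j a b"
    and "\<And>p q. \<bar>content p q - content i j\<bar> \<le> 1 \<Longrightarrow> entry S' f' p q = entry S f p q"
  shows "toggled_entry t S' f' i j a b = toggled_entry t S f i j a b"
proof -
  have "1 \<le> a" "1 \<le> b" "content a b = content i j"
    using nw_diag_content[OF assms(1)] by auto
  then have "entry S' f' p q = entry S f p q"
    if "(p, q) \<in> {(a - 1, b), (a, b - 1), (a, b + 1), (a + 1, b), (a, b)}" for p q
    using that by (intro assms(2)) (auto simp: content_def)
  then show ?thesis
    unfolding toggled_entry_def by simp
qed

lemma toggle_step_commute:
  assumes "(1, 1) \<le> x" "(1, 1) \<le> y" "\<not> x \<le> y" "\<not> y \<le> x"
  shows "toggle_step t (toggle_step t s x) y = toggle_step t (toggle_step t s y) x"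
proof -
  obtain S f i j i' j' where s: "s = (S, f)" and x: "x = (i, j)" and y: "y = (i', j')"
    by (cases s, cases x, cases y)
  have pos: "1 \<le> i" "1 \<le> j" "1 \<le> i'" "1 \<le> j'"
    using assms(1,2) x y by auto
  have far: "\<bar>content i j - content i' j'\<bar> \<ge> 2"
    using assms(3,4) x y by (intro abs_content_diff_ge_2) auto
  have two_steps: "toggle_step t (toggle_step t (S, f) (i, j)) (i', j') =
    (insert (i', j') (insert (i, j) S), \<lambda>a b.
       if nw_diag i' j' a b then toggled_entry t S f i' j' a b
       else if nw_diag i j a b then toggled_entry t S f i j a b else f a b)"
    if "1 \<le> i" "1 \<le> j" "1 \<le> i'" "1 \<le> j'" "\<bar>content i j - content i' j'\<bar> \<ge> 2" for i j i' j'
  proof -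
    have "toggled_entry t (fst (toggle_step t (S, f) (i, j))) (snd (toggle_step t (S, f) (i, j))) i' j' a b
        = toggled_entry t S f i' j' a b" if "nw_diag i' j' a b" for a b
      using \<open>nw_diag i' j' a b\<close>
    proof (rule toggled_entry_cong)
      fix p q
      assume "\<bar>content p q - content i' j'\<bar> \<le> 1"
      with \<open>\<bar>content i j - content i' j'\<bar> \<ge> 2\<close> have "content p q \<noteq> content i j" by auto
      then show "entry (fst (toggle_step t (S, f) (i, j))) (snd (toggle_step t (S, f) (i, j))) p q = entry S f p q"
        using \<open>1 \<le> i\<close> \<open>1 \<le> j\<close> by (rule entry_toggle_step_off_diag[rotated 2])
    qed
    then show ?thesis
      using that by (simp add: toggle_step_eq fun_eq_iff)
  qed
  have "\<not> (nw_diag i j a b \<and> nw_diag i' j' a b)" for a b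
    using far nw_diag_content(1)[of i j a b] nw_diag_content(1)[of i' j' a b] by auto
  then show ?thesis
    unfolding s x y using two_steps pos far
    by (auto simp: fun_eq_iff insert_commute abs_minus_commute)
qed

definition transpose_state ::
  "(nat \<times> nat) set \<times> (nat \<Rightarrow> nat \<Rightarrow> int) \<Rightarrow> (nat \<times> nat) set \<times> (nat \<Rightarrow> nat \<Rightarrow> int)" where
  "transpose_state s = (prod.swap ` fst s, \<lambda>a b. snd s b a)"

lemma entry_transpose: "entry (prod.swap ` S) (\<lambda>a b. f b a) p q = entry S f q p"
  unfolding entry_def by (auto simp: image_iff)

lemma nw_diag_transpose: "nw_diag j i b a = nw_diag i j a b"
  unfolding nw_diag_def by (auto simp: min.commute)

lemma toggled_entry_transpose:
  "toggled_entry (\<lambda>i j. t j i) (prod.swap ` S) (\<lambda>a b. f b a) j i a b = toggled_entry t S f i j b a"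
  unfolding toggled_entry_def entry_transpose by (auto simp: max.commute min.commute)

lemma toggle_step_transpose:
  assumes "(1, 1) \<le> x"
  shows "toggle_step (\<lambda>i j. t j i) (transpose_state s) (prod.swap x) = transpose_state (toggle_step t s x)"
proof -
  obtain S f i j where s: "s = (S, f)" and x: "x = (i, j)"
    by (cases s, cases x)
  have "1 \<le> i" "1 \<le> j"
    using assms x by auto
  then show ?thesis
    unfolding s x transpose_state_def
    by (simp add: toggle_step_eq nw_diag_transpose) (simp only: toggled_entry_transpose)
qed

lemma foldl_toggle_step_transpose:
  assumes "\<forall>x \<in> set xs. (1, 1) \<le> x"
  shows "foldl (toggle_step (\<lambda>i j. t j i)) (transpose_state s) (map prod.swap xs)
    = transpose_state (foldl (toggle_step t) s xs)"
  using assms by (induction xs arbitrary: s) (simp_all add: toggle_step_transpose)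

definition down_closed :: "(nat \<times> nat) set \<Rightarrow> bool" where
  "down_closed A \<longleftrightarrow> (\<forall>x \<in> A. (1, 1) \<le> x \<and> {(1, 1)..x} \<subseteq> A)"

text \<open>The orders in which the boxes of a shape may be added in the recursive description of
  the toggle map: every prefix is itself a shape.\<close>

definition corner_sequence :: "(nat \<times> nat) list \<Rightarrow> bool" where
  "corner_sequence xs \<longleftrightarrow> distinct xs \<and> (\<forall>n. down_closed (set (take n xs)))"

lemma down_closedD:
  "down_closed A \<Longrightarrow> x \<in> A \<Longrightarrow> (1, 1) \<le> y \<Longrightarrow> y \<le> x \<Longrightarrow> y \<in> A"
  unfolding down_closed_def by (meson atLeastAtMost_iff subsetD)

lemma down_closed_pos: "down_closed A \<Longrightarrow> x \<in> A \<Longrightarrow> (1, 1) \<le> x"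
  unfolding down_closed_def by auto

lemma corner_sequence_down_closed: "corner_sequence xs \<Longrightarrow> down_closed (set xs)"
  unfolding corner_sequence_def by (metis take_all_iff order.refl)

lemma corner_sequence_take: "corner_sequence xs \<Longrightarrow> corner_sequence (take n xs)"
  unfolding corner_sequence_def by simp

lemma ex_take_filter_eq_filter_take: "\<exists>m. take n (filter P xs) = filter P (take m xs)"
proof (induction xs arbitrary: n)
  case Nil
  then show ?case by simp
next
  case (Cons x xs)
  show ?case
  proof (cases "P x \<and> n > 0")
    case True
    then obtain m where "take (n - 1) (filter P xs) = filter P (take m xs)"
      using Cons.IH by blast
    with True show ?thesis
      by (intro exI[of _ "Suc m"]) (simp add: take_Cons')
  next
    case False
    then obtain m where "take n (filter P xs) = filter P (take m xs)"
      using Cons.IH by blast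
    with False show ?thesis
      by (cases "P x") (auto intro: exI[of _ "Suc m"] exI[of _ 0])
  qed
qed

lemma down_closed_Int: "down_closed A \<Longrightarrow> down_closed B \<Longrightarrow> down_closed (A \<inter> B)"
  unfolding down_closed_def by blast

lemma corner_sequence_filter:
  assumes "corner_sequence xs" "down_closed Y"
  shows "corner_sequence (filter (\<lambda>x. x \<in> Y) xs)"
  unfolding corner_sequence_def
proof (intro conjI allI)
  show "distinct (filter (\<lambda>x. x \<in> Y) xs)"
    using assms(1) unfolding corner_sequence_def by simp
  fix n
  obtain m where "take n (filter (\<lambda>x. x \<in> Y) xs) = filter (\<lambda>x. x \<in> Y) (take m xs)"
    using ex_take_filter_eq_filter_take by blast
  then have "set (take n (filter (\<lambda>x. x \<in> Y) xs)) = set (take m xs) \<inter> Y"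
    by auto
  then show "down_closed (set (take n (filter (\<lambda>x. x \<in> Y) xs)))"
    using assms unfolding corner_sequence_def by (simp add: down_closed_Int)
qed

lemma foldl_toggle_step_move_last:
  assumes "(1, 1) \<le> z" "\<forall>y \<in> set ys. (1, 1) \<le> y \<and> \<not> z \<le> y \<and> \<not> y \<le> z"
  shows "foldl (toggle_step t) s (z # ys) = foldl (toggle_step t) s (ys @ [z])"
  using assms(2)
proof (induction ys arbitrary: s)
  case Nil
  then show ?case by simp
next
  case (Cons y ys)
  have "foldl (toggle_step t) s (z # y # ys) = foldl (toggle_step t) (toggle_step t s y) (z # ys)"
    using assms(1) Cons.prems by (simp add: toggle_step_commute)
  also have "\<dots> = foldl (toggle_step t) s ((y # ys) @ [z])"
    using Cons by simp
  finally show ?case .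
qed

lemma corner_sequence_incomparable:
  assumes "corner_sequence (as @ z # bs)" "down_closed Y" "z \<notin> Y" "set bs \<subseteq> Y"
  shows "\<forall>y \<in> set bs. (1, 1) \<le> y \<and> \<not> z \<le> y \<and> \<not> y \<le> z"
proof (intro ballI conjI)
  fix y
  assume y: "y \<in> set bs"
  have distinct: "distinct (as @ z # bs)"
    using assms(1) unfolding corner_sequence_def by simp
  have pos: "(1, 1) \<le> x" if "x \<in> set (as @ z # bs)" for x
    using that down_closed_pos[OF corner_sequence_down_closed[OF assms(1)]] by blast
  then show "(1, 1) \<le> y"
    using y by simp
  show "\<not> z \<le> y"
    using y assms(2-4) pos[of z] down_closedD[of Y y z] by auto
  have "down_closed (set (take (Suc (length as)) (as @ z # bs)))"
    using assms(1) unfolding corner_sequence_def by blast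
  then have "down_closed (insert z (set as))"
    by simp
  then show "\<not> y \<le> z"
    using y distinct \<open>(1, 1) \<le> y\<close> down_closedD[of "insert z (set as)" z y] by auto
qed

text \<open>The last box z of ys is incomparable with every box following it in xs, so it can be moved
  to the end of xs, and the rest is the induction hypothesis.\<close>

lemma foldl_toggle_step_corner_sequences:
  assumes "corner_sequence xs" "corner_sequence ys" "set xs = set ys"
  shows "foldl (toggle_step t) s xs = foldl (toggle_step t) s ys"
  using assms
proof (induction ys arbitrary: xs rule: rev_induct)
  case Nil
  then show ?case by simp
next
  case (snoc z ys)
  have ys: "corner_sequence ys" "z \<notin> set ys"
    using corner_sequence_take[OF snoc.prems(2), of "length ys"] snoc.prems(2)
    by (simp_all add: corner_sequence_def)
  have "z \<in> set xs"
    using snoc.prems(3) by simp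
  then obtain as bs where xs: "xs = as @ z # bs"
    by (blast dest: split_list)
  have distinct: "distinct (as @ z # bs)"
    using snoc.prems(1) xs unfolding corner_sequence_def by simp
  have as_bs: "set as \<union> set bs = set ys"
    using snoc.prems(3) distinct ys(2) xs by auto
  have "\<forall>x \<in> set as. x \<in> set ys" "\<forall>x \<in> set bs. x \<in> set ys"
    using as_bs by auto
  then have "filter (\<lambda>x. x \<in> set ys) xs = as @ bs"
    unfolding xs using ys(2) by simp
  then have "corner_sequence (as @ bs)"
    using corner_sequence_filter[OF snoc.prems(1) corner_sequence_down_closed[OF ys(1)]] by simp
  then have IH: "foldl (toggle_step t) s (as @ bs) = foldl (toggle_step t) s ys"
    using ys(1) as_bs by (intro snoc.IH) simp_all
  have "\<forall>y \<in> set bs. (1, 1) \<le> y \<and> \<not> z \<le> y \<and> \<not> y \<le> z"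
    using snoc.prems(1) corner_sequence_down_closed[OF ys(1)] ys(2) as_bs
    unfolding xs by (intro corner_sequence_incomparable) auto
  then have "foldl (toggle_step t) (foldl (toggle_step t) s as) (z # bs)
      = foldl (toggle_step t) (foldl (toggle_step t) s as) (bs @ [z])"
    using down_closed_pos[OF corner_sequence_down_closed[OF snoc.prems(2)]]
    by (intro foldl_toggle_step_move_last) auto
  then show ?case
    unfolding xs using IH by simp
qed

lemma down_closedI:
  assumes "\<And>i j. (i, j) \<in> A \<Longrightarrow> 1 \<le> i \<and> 1 \<le> j"
    and "\<And>i j i' j'. (i, j) \<in> A \<Longrightarrow> 1 \<le> i' \<Longrightarrow> i' \<le> i \<Longrightarrow> 1 \<le> j' \<Longrightarrow> j' \<le> j \<Longrightarrow> (i', j') \<in> A"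
  shows "down_closed A"
  unfolding down_closed_def
proof (intro ballI conjI subsetI)
  fix x y
  assume "x \<in> A"
  then show "(1, 1) \<le> x"
    using assms(1) by (cases x) auto
  assume "y \<in> {(1, 1)..x}"
  with \<open>x \<in> A\<close> show "y \<in> A"
    using assms(2) by (cases x, cases y) auto
qed

lemma down_closed_boxes:
  assumes "sorted_wrt (\<ge>) lam"
  shows "down_closed (boxes lam)"
proof (rule down_closedI)
  fix i j i' j'
  assume ij: "(i, j) \<in> boxes lam" and "1 \<le> i'" "i' \<le> i" "1 \<le> j'" "j' \<le> j"
  moreover have "lam ! (i - 1) \<le> lam ! (i' - 1)"
    using assms ij \<open>1 \<le> i'\<close> \<open>i' \<le> i\<close>
    by (cases "i' = i") (auto simp: sorted_wrt_iff_nth_less boxes_def)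
  ultimately show "(i', j') \<in> boxes lam"
    by (auto simp: boxes_def)
qed (auto simp: boxes_def)

lemma set_reading_boxes: "set (reading_boxes lam) = boxes lam"
  unfolding reading_boxes_def boxes_def by (auto simp del: upt_Suc simp: image_iff)

lemma reading_boxes_snoc:
  "reading_boxes (lam @ [r]) = reading_boxes lam @ map (Pair (Suc (length lam))) [1..<Suc r]"
proof -
  have rows: "map (\<lambda>i. map (Pair i) [1..<Suc ((lam @ [r]) ! (i - 1))]) [1..<Suc (length lam)]
      = map (\<lambda>i. map (Pair i) [1..<Suc (lam ! (i - 1))]) [1..<Suc (length lam)]"
    by (rule map_cong) (auto simp: nth_append simp del: upt_Suc)
  have last_row: "[1..<Suc (Suc (length lam))] = [1..<Suc (length lam)] @ [Suc (length lam)]"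
    by simp
  show ?thesis
    unfolding reading_boxes_def length_append_singleton last_row map_append concat_append rows
    by simp
qed

lemma take_map_Pair_upt: "take n (map (Pair i) [1..<Suc r]) = map (Pair i) [1..<Suc (min n r)]"
  by (cases "n \<le> r") (simp_all add: take_map min_def del: upt_Suc)

lemma corner_sequence_reading_boxes:
  assumes "sorted_wrt (\<ge>) lam"
  shows "corner_sequence (reading_boxes lam)"
  using assms
proof (induction lam rule: rev_induct)
  case Nil
  then show ?case
    by (simp add: reading_boxes_def corner_sequence_def down_closed_def)
next
  case (snoc r lam)
  let ?row = "map (Pair (Suc (length lam))) [1..<Suc r]"
  have sorted: "sorted_wrt (\<ge>) lam" "sorted_wrt (\<ge>) (lam @ [k])" if "k \<le> r" for k
    using snoc.prems that by (auto simp: sorted_wrt_append)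
  then have IH: "corner_sequence (reading_boxes lam)"
    using snoc.IH by blast
  have "distinct (reading_boxes lam @ ?row)"
    using IH by (auto simp: corner_sequence_def distinct_map inj_on_def set_reading_boxes boxes_def)
  moreover have "down_closed (set (take n (reading_boxes lam @ ?row)))" for n
  proof (cases "n \<le> length (reading_boxes lam)")
    case True
    then show ?thesis
      using IH by (simp add: corner_sequence_def)
  next
    case False
    then have "take n (reading_boxes lam @ ?row) = reading_boxes (lam @ [min (n - length (reading_boxes lam)) r])"
      using take_map_Pair_upt[of "n - length (reading_boxes lam)"] by (simp add: reading_boxes_snoc del: upt_Suc)
    then show ?thesis
      using sorted by (simp add: set_reading_boxes down_closed_boxes)
  qed
  ultimately show ?case
    by (simp add: corner_sequence_def reading_boxes_snoc)
qed

lemma down_closed_swap: "down_closed A \<Longrightarrow> down_closed (prod.swap ` A)"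
  unfolding down_closed_def by (force simp: less_eq_prod_def)

lemma corner_sequence_map_swap: "corner_sequence xs \<Longrightarrow> corner_sequence (map prod.swap xs)"
  unfolding corner_sequence_def by (simp add: distinct_map take_map down_closed_swap)

lemma length_filter_mono: "(\<And>x. P x \<Longrightarrow> Q x) \<Longrightarrow> length (filter P xs) \<le> length (filter Q xs)"
  by (induction xs) auto

lemma sorted_conj_part: "sorted_wrt (\<ge>) (conj_part lam)"
proof -
  have "sorted_wrt (\<lambda>a b. length (filter (\<lambda>r. b \<le> r) lam) \<le> length (filter (\<lambda>r. a \<le> r) lam))
      [1..<Suc (hd lam)]"
    by (rule sorted_wrt_mono_rel[OF _ sorted_wrt_upt]) (auto intro: length_filter_mono)
  then show ?thesis
    unfolding conj_part_def by (simp add: sorted_wrt_map del: upt_Suc)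
qed

lemma less_length_filter_ge_iff:
  fixes lam :: "nat list"
  assumes "sorted_wrt (\<ge>) lam"
  shows "j < length (filter (\<lambda>r. c \<le> r) lam) \<longleftrightarrow> j < length lam \<and> c \<le> lam ! j"
  using assms
proof (induction lam arbitrary: j)
  case Nil
  then show ?case by simp
next
  case (Cons x lam)
  show ?case
  proof (cases "c \<le> x")
    case True
    with Cons show ?thesis
      by (cases j) auto
  next
    case False
    with Cons.prems have "filter (\<lambda>r. c \<le> r) lam = []" "\<forall>r \<in> set lam. r < c"
      by (auto simp: filter_empty_conv)
    with False show ?thesis
      by (cases j) (auto, meson leD nth_mem)
  qed
qed

lemma boxes_conj_part:
  assumes "sorted_wrt (\<ge>) lam"
  shows "(i, j) \<in> boxes (conj_part lam) \<longleftrightarrow> (j, i) \<in> boxes lam"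
proof (cases lam)
  case Nil
  then show ?thesis
    by (auto simp: boxes_def conj_part_def)
next
  case (Cons x xs)
  then have le_hd: "lam ! k \<le> x" if "k < length lam" for k
    using assms that by (cases k) auto
  have "(j, i) \<in> boxes lam \<longleftrightarrow> 1 \<le> i \<and> i \<le> x \<and> 1 \<le> j \<and> j - 1 < length (filter (\<lambda>r. i \<le> r) lam)"
    using less_length_filter_ge_iff[OF assms, of "j - 1" i] unfolding boxes_def
    by (auto simp: Suc_le_eq intro: order.trans[OF _ le_hd])
  moreover have "(i, j) \<in> boxes (conj_part lam) \<longleftrightarrow>
      1 \<le> i \<and> i \<le> x \<and> 1 \<le> j \<and> j - 1 < length (filter (\<lambda>r. i \<le> r) lam)"
    using Cons unfolding boxes_def conj_part_def by (auto simp del: upt_Suc)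
  ultimately show ?thesis
    by simp
qed

theorem proposition2p7:
  fixes lam :: "nat list" and t :: "nat \<Rightarrow> nat \<Rightarrow> nat"
  assumes "is_partition lam"
  shows "toggle (conj_part lam) (\<lambda>i j. t j i) = (\<lambda>i j. toggle lam t j i)"
proof -
  have sorted: "sorted_wrt (\<ge>) lam"
    using assms unfolding is_partition_def by simp
  let ?s0 = "({}, \<lambda>_ _. 0) :: (nat \<times> nat) set \<times> (nat \<Rightarrow> nat \<Rightarrow> int)"
  let ?R = "reading_boxes lam"
  let ?C = "map prod.swap (reading_boxes (conj_part lam))"
  have C: "corner_sequence ?C"
    by (intro corner_sequence_map_swap corner_sequence_reading_boxes sorted_conj_part)
  have set_C: "set ?C = set ?R"
    using boxes_conj_part[OF sorted] by (force simp: set_reading_boxes)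
  have "foldl (toggle_step t) ?s0 ?C = foldl (toggle_step t) ?s0 ?R"
    using C corner_sequence_reading_boxes[OF sorted] set_C
    by (rule foldl_toggle_step_corner_sequences)
  moreover have "foldl (toggle_step (\<lambda>i j. t j i)) ?s0 (reading_boxes (conj_part lam))
      = transpose_state (foldl (toggle_step t) ?s0 ?C)"
    using foldl_toggle_step_transpose[of ?C t ?s0]
      down_closed_pos[OF corner_sequence_down_closed[OF C]]
    by (simp add: transpose_state_def comp_def)
  ultimately show ?thesis
    unfolding toggle_def using boxes_conj_part[OF sorted]
    by (simp add: fun_eq_iff transpose_state_def)
qed

end
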